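(* Let $L$ be a bounded distributive lattice and $f\colon L^n\to L$ an inf-homogeneous and g-comonotone supremal aggregation function. Then $f$ is a Sugeno integral, i.e. $f=\mathsf{Su}_m$ for some $L$-valued capacity $m$ on $[n]$.
   Context: $[n]=\{1,\dots,n\}$. An aggregation function is a monotone $f\colon L^n\to L$ with $f(0,\dots,0)=0$, $f(1,\dots,1)=1$. An $L$-valued capacity is $m\colon2^{[n]}\to L$, monotone, $m(\emptyset)=0$, $m([n])=1$; $\mathsf{Su}_m(\mathbf x)=\bigvee_{I\subseteq[n]}\big(m(I)\wedge\bigwedge_{i\in I}x_i\big)$ (empty meet $=1$). For $c\in L$, $\mathbf c=(c,\dots,c)$; $f$ is inf-homogeneous if $f(\mathbf c\wedge\mathbf x)=c\wedge f(\mathbf x)$ for all $\mathbf x\in L^n,c\in L$. $\mathbf x,\mathbf y$ are g-comonotone if for all $i,j$: $(x_i\vee y_i)\wedge(x_j\vee y_j)=(x_i\wedge x_j)\vee(y_i\wedge y_j)$; $f$ is g-comonotone supremal if $f(\mathbf x\vee\mathbf y)=f(\mathbf x)\vee f(\mathbf y)$ for all g-comonotone $\mathbf x,\mathbf y$. *)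

theory Defs
  imports Main
begin

text \<open>L is a bounded distributive lattice (type class); the index set [n] is a
finite type 'n; vectors in L^n are functions 'n \<Rightarrow> L.\<close>

definition aggregation_function :: "(('n \<Rightarrow> 'a) \<Rightarrow> 'a::{distrib_lattice,bounded_lattice}) \<Rightarrow> bool" where
  "aggregation_function f \<longleftrightarrow> mono f \<and> f (\<lambda>_. bot) = bot \<and> f (\<lambda>_. top) = top"

definition capacity :: "('n set \<Rightarrow> 'a::{distrib_lattice,bounded_lattice}) \<Rightarrow> bool" where
  "capacity m \<longleftrightarrow> mono m \<and> m {} = bot \<and> m UNIV = top"

definition big_meet :: "'a::{distrib_lattice,bounded_lattice} set \<Rightarrow> 'a" where
  "big_meet S = Inf_fin (insert top S)"

definition sugeno :: "('n::finite set \<Rightarrow> 'a::{distrib_lattice,bounded_lattice}) \<Rightarrow> ('n \<Rightarrow> 'a) \<Rightarrow> 'a" where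
  "sugeno m x = Sup_fin ((\<lambda>I. inf (m I) (big_meet (x ` I))) ` (UNIV :: 'n set set))"

definition inf_homogeneous :: "(('n \<Rightarrow> 'a) \<Rightarrow> 'a::{distrib_lattice,bounded_lattice}) \<Rightarrow> bool" where
  "inf_homogeneous f \<longleftrightarrow> (\<forall>x c. f (\<lambda>i. inf c (x i)) = inf c (f x))"

definition g_comonotone :: "('n \<Rightarrow> 'a::{distrib_lattice,bounded_lattice}) \<Rightarrow> ('n \<Rightarrow> 'a) \<Rightarrow> bool" where
  "g_comonotone x y \<longleftrightarrow> (\<forall>i j. inf (sup (x i) (y i)) (sup (x j) (y j)) = sup (inf (x i) (x j)) (inf (y i) (y j)))"

definition g_comonotone_supremal :: "(('n \<Rightarrow> 'a) \<Rightarrow> 'a::{distrib_lattice,bounded_lattice}) \<Rightarrow> bool" where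
  "g_comonotone_supremal f \<longleftrightarrow>
     (\<forall>x y. g_comonotone x y \<longrightarrow> f (\<lambda>i. sup (x i) (y i)) = sup (f x) (f y))"

end

theory Submission
  imports Defs
begin

text \<open>Write \<open>e\<^sub>J\<close> for the characteristic vector of \<open>J\<close> and \<open>c\<^sub>J = \<Sqinter>\<^sub>i\<^sub>\<in>\<^sub>J x\<^sub>i\<close>.
  Then \<open>x = \<Squnion>\<^sub>J c\<^sub>J \<sqinter> e\<^sub>J\<close>, and inf-homogeneity gives \<open>f (c\<^sub>J \<sqinter> e\<^sub>J) = c\<^sub>J \<sqinter> m J\<close> with
  \<open>m J = f e\<^sub>J\<close>. It remains to pull \<open>f\<close> through the join. Adding the terms one set at a time,
  from large sets to small ones, each new term \<open>c\<^sub>I \<sqinter> e\<^sub>I\<close> is g-comonotone with the join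
  \<open>z\<close> of the terms already present: for \<open>i \<in> I\<close>, \<open>j \<notin> I\<close> every contribution to
  \<open>c\<^sub>I \<sqinter> z\<^sub>j\<close> comes from some \<open>J \<ni> j\<close>, and then \<open>c\<^sub>I \<sqinter> c\<^sub>J = c\<^sub>I\<^sub>\<union>\<^sub>J \<le> z\<^sub>i\<close>
  because \<open>I \<union> J\<close> was added earlier.\<close>

definition big_join :: "'a::{distrib_lattice,bounded_lattice} set \<Rightarrow> 'a" where
  "big_join A = Sup_fin (insert bot A)"

lemma big_join_le_iff: "finite A \<Longrightarrow> big_join A \<le> u \<longleftrightarrow> (\<forall>a\<in>A. a \<le> u)"
  unfolding big_join_def by (simp add: Sup_fin.bounded_iff)

lemma big_join_upper: "finite A \<Longrightarrow> a \<in> A \<Longrightarrow> a \<le> big_join A"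
  unfolding big_join_def by (simp add: Sup_fin.coboundedI)

lemma big_join_empty [simp]: "big_join {} = bot"
  unfolding big_join_def by simp

lemma big_join_insert: "finite A \<Longrightarrow> big_join (insert a A) = sup a (big_join A)"
  by (rule order.antisym) (auto simp: big_join_le_iff big_join_upper intro: le_supI2)

lemma inf_big_join_distrib: "finite A \<Longrightarrow> inf c (big_join A) = big_join (inf c ` A)"
  by (induction A rule: finite_induct) (auto simp: big_join_insert inf_sup_distrib1)

lemma big_meet_lower: "finite S \<Longrightarrow> s \<in> S \<Longrightarrow> big_meet S \<le> s"
  unfolding big_meet_def by (simp add: Inf_fin.coboundedI)

lemma le_big_meet_iff: "finite S \<Longrightarrow> u \<le> big_meet S \<longleftrightarrow> (\<forall>s\<in>S. u \<le> s)"
  unfolding big_meet_def by (simp add: Inf_fin.bounded_iff)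

lemma big_meet_image_Un:
  fixes x :: "'n::finite \<Rightarrow> 'a::{distrib_lattice,bounded_lattice}"
  shows "big_meet (x ` (I \<union> J)) = inf (big_meet (x ` I)) (big_meet (x ` J))"
  by (rule order.antisym) (auto simp: le_big_meet_iff big_meet_lower intro: le_infI1 le_infI2)

lemma big_meet_singleton [simp]: "big_meet {a} = a"
  unfolding big_meet_def by simp

lemma sugeno_eq_big_join:
  "sugeno m x = big_join ((\<lambda>J. inf (big_meet (x ` J)) (m J)) ` UNIV)"
  unfolding sugeno_def big_join_def by (subst Sup_fin.insert) (auto simp: inf_commute)

definition char_vec :: "'n set \<Rightarrow> 'n \<Rightarrow> 'a::{distrib_lattice,bounded_lattice}" where
  "char_vec J i = (if i \<in> J then top else bot)"

definition atom :: "('n \<Rightarrow> 'a::{distrib_lattice,bounded_lattice}) \<Rightarrow> 'n set \<Rightarrow> 'n \<Rightarrow> 'a" where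
  "atom x J i = inf (big_meet (x ` J)) (char_vec J i)"

definition join_atoms :: "('n::finite \<Rightarrow> 'a::{distrib_lattice,bounded_lattice}) \<Rightarrow> 'n set set \<Rightarrow> 'n \<Rightarrow> 'a" where
  "join_atoms x S i = big_join ((\<lambda>J. atom x J i) ` S)"

lemma atom_in [simp]: "i \<in> J \<Longrightarrow> atom x J i = big_meet (x ` J)"
  and atom_notin [simp]: "i \<notin> J \<Longrightarrow> atom x J i = bot"
  unfolding atom_def char_vec_def by simp_all

lemma capacity_char_vec:
  fixes f :: "('n \<Rightarrow> 'a::{distrib_lattice,bounded_lattice}) \<Rightarrow> 'a"
  assumes "aggregation_function f"
  shows "capacity (\<lambda>J. f (char_vec J))"
proof -
  have "mono f" and "f (\<lambda>_. bot) = bot" and "f (\<lambda>_. top) = top"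
    using assms unfolding aggregation_function_def by auto
  have "mono (\<lambda>J. f (char_vec J))"
  proof (rule monoI)
    fix J K :: "'n set"
    assume "J \<subseteq> K"
    then have "char_vec J \<le> (char_vec K :: 'n \<Rightarrow> 'a)"
      by (auto simp: le_fun_def char_vec_def)
    with \<open>mono f\<close> show "f (char_vec J) \<le> f (char_vec K)"
      by (rule monoD)
  qed
  moreover have "(char_vec {} :: 'n \<Rightarrow> 'a) = (\<lambda>_. bot)" and "(char_vec UNIV :: 'n \<Rightarrow> 'a) = (\<lambda>_. top)"
    by (auto simp: char_vec_def)
  ultimately show ?thesis
    unfolding capacity_def using \<open>f (\<lambda>_. bot) = bot\<close> \<open>f (\<lambda>_. top) = top\<close> by simp
qed

lemma inf_homogeneous_atom:
  "inf_homogeneous f \<Longrightarrow> f (atom x J) = inf (big_meet (x ` J)) (f (char_vec J))"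
  unfolding inf_homogeneous_def atom_def[abs_def] by simp

lemma join_atoms_UNIV: "join_atoms x UNIV = x"
proof
  fix i
  have "atom x J i \<le> x i" for J
    by (cases "i \<in> J") (simp_all add: big_meet_lower)
  then have "join_atoms x UNIV i \<le> x i"
    unfolding join_atoms_def by (simp add: big_join_le_iff)
  moreover have "x i \<le> join_atoms x UNIV i"
    unfolding join_atoms_def by (rule big_join_upper) (simp_all add: rev_image_eqI[of "{i}"])
  ultimately show "join_atoms x UNIV i = x i"
    by (rule order.antisym)
qed

lemma inf_big_meet_join_atoms_le:
  assumes closed: "\<forall>J\<in>S. I \<union> J \<in> S" and "i \<in> I"
  shows "inf (big_meet (x ` I)) (join_atoms x S j) \<le> join_atoms x S i"
proof -
  have "inf (big_meet (x ` I)) (atom x J j) \<le> join_atoms x S i" if "J \<in> S" for J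
  proof (cases "j \<in> J")
    case True
    have "inf (big_meet (x ` I)) (atom x J j) = atom x (I \<union> J) i"
      using True \<open>i \<in> I\<close> by (simp add: big_meet_image_Un)
    then show ?thesis
      unfolding join_atoms_def using closed \<open>J \<in> S\<close> by (auto intro: big_join_upper)
  qed simp
  then show ?thesis
    unfolding join_atoms_def[of x S j] by (auto simp: inf_big_join_distrib big_join_le_iff)
qed

lemma inf_sup_eq_inf_if_inf_le:
  fixes a b c :: "'a::distrib_lattice"
  assumes "inf c b \<le> a"
  shows "inf (sup a c) b = inf a b"
proof -
  have "inf (sup a c) b = sup (inf a b) (inf c b)"
    by (rule inf_sup_distrib2)
  also have "\<dots> = inf a b"
    using assms by (simp add: sup.absorb1)
  finally show ?thesis .
qed

lemma g_comonotone_join_atoms_atom: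
  assumes "\<forall>J\<in>S. I \<union> J \<in> S"
  shows "g_comonotone (join_atoms x S) (atom x I)"
  unfolding g_comonotone_def
proof (intro allI)
  fix i j
  let ?z = "join_atoms x S" and ?c = "big_meet (x ` I)"
  show "inf (sup (?z i) (atom x I i)) (sup (?z j) (atom x I j)) =
        sup (inf (?z i) (?z j)) (inf (atom x I i) (atom x I j))"
  proof (cases "i \<in> I"; cases "j \<in> I")
    assume "i \<in> I" "j \<in> I"
    then show ?thesis by (simp add: sup_inf_distrib2)
  next
    assume "i \<in> I" "j \<notin> I"
    have "inf ?c (?z j) \<le> ?z i"
      using assms \<open>i \<in> I\<close> by (rule inf_big_meet_join_atoms_le)
    then have "inf (sup (?z i) ?c) (?z j) = inf (?z i) (?z j)"
      by (rule inf_sup_eq_inf_if_inf_le)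
    with \<open>i \<in> I\<close> \<open>j \<notin> I\<close> show ?thesis by simp
  next
    assume "i \<notin> I" "j \<in> I"
    have "inf ?c (?z i) \<le> ?z j"
      using assms \<open>j \<in> I\<close> by (rule inf_big_meet_join_atoms_le)
    then have "inf (sup (?z j) ?c) (?z i) = inf (?z j) (?z i)"
      by (rule inf_sup_eq_inf_if_inf_le)
    then have "inf (?z i) (sup (?z j) ?c) = inf (?z i) (?z j)"
      by (metis inf.commute)
    with \<open>i \<notin> I\<close> \<open>j \<in> I\<close> show ?thesis by simp
  next
    assume "i \<notin> I" "j \<notin> I"
    then show ?thesis by simp
  qed
qed

lemma inf_homogeneous_comonotone_supremal_join_atoms:
  fixes f :: "('n::finite \<Rightarrow> 'a::{distrib_lattice,bounded_lattice}) \<Rightarrow> 'a"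
  assumes "f (\<lambda>_. bot) = bot" and "inf_homogeneous f" and "g_comonotone_supremal f"
    and "\<forall>J\<in>S. \<forall>K. J \<subseteq> K \<longrightarrow> K \<in> S"
  shows "f (join_atoms x S) = big_join ((\<lambda>J. inf (big_meet (x ` J)) (f (char_vec J))) ` S)"
proof -
  have "finite S" by simp
  then show ?thesis
    using assms(4)
  proof (induction S rule: finite_psubset_induct)
    case (psubset S)
    show ?case
    proof (cases "S = {}")
      case True
      then show ?thesis
        using assms(1) by (simp add: join_atoms_def[abs_def])
    next
      case False
      then obtain I where "I \<in> S" and I_minimal: "\<forall>J\<in>S. J \<subseteq> I \<longrightarrow> J = I"
        using finite_has_minimal[of S] by auto
      define S' where "S' = S - {I}"
      have S: "S = insert I S'"
        unfolding S'_def using \<open>I \<in> S\<close> by auto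
      have S'_closed: "\<forall>J\<in>S'. \<forall>K. J \<subseteq> K \<longrightarrow> K \<in> S'"
        unfolding S'_def using psubset.prems I_minimal by blast
      have "join_atoms x S = (\<lambda>i. sup (join_atoms x S' i) (atom x I i))"
        unfolding join_atoms_def[abs_def] S by (simp add: big_join_insert sup_commute)
      moreover have "g_comonotone (join_atoms x S') (atom x I)"
        using S'_closed by (intro g_comonotone_join_atoms_atom) blast
      ultimately have "f (join_atoms x S) = sup (f (join_atoms x S')) (f (atom x I))"
        using assms(3) unfolding g_comonotone_supremal_def by simp
      moreover have "f (join_atoms x S') =
          big_join ((\<lambda>J. inf (big_meet (x ` J)) (f (char_vec J))) ` S')"
        using psubset.IH[of S'] S'_closed \<open>I \<in> S\<close> unfolding S'_def by blast
      ultimately show ?thesis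
        unfolding S using assms(2) by (simp add: inf_homogeneous_atom big_join_insert sup_commute)
    qed
  qed
qed

theorem corollary1:
  fixes f :: "('n::finite \<Rightarrow> 'a::{distrib_lattice,bounded_lattice}) \<Rightarrow> 'a"
  assumes "aggregation_function f"
    and "inf_homogeneous f"
    and "g_comonotone_supremal f"
  shows "\<exists>m :: 'n set \<Rightarrow> 'a. capacity m \<and> f = sugeno m"
proof (intro exI conjI)
  show "capacity (\<lambda>J. f (char_vec J))"
    using assms(1) by (rule capacity_char_vec)
  show "f = sugeno (\<lambda>J. f (char_vec J))"
  proof
    fix x
    have "f (\<lambda>_. bot) = bot"
      using assms(1) unfolding aggregation_function_def by simp
    then have "f (join_atoms x UNIV) = sugeno (\<lambda>J. f (char_vec J)) x"
      using assms(2,3) by (simp add: inf_homogeneous_comonotone_supremal_join_atoms sugeno_eq_big_join)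
    then show "f x = sugeno (\<lambda>J. f (char_vec J)) x"
      by (simp add: join_atoms_UNIV)
  qed
qed

end
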